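(* Let $Q$ be a finite connected quandle. Then $Q$ is isomorphic to $\mathrm{GAlex}(G,f)$ for some group $G$ and $f\in\mathrm{Aut}(G)$ if and only if one of the following holds: (i) $|Q|=|\mathrm{Inn}(Q)'|$; (ii) $\mathrm{Stab}_{\mathrm{Inn}(Q)'}(e)=\{1\}$ for every $e\in Q$. If either (i) or (ii) holds then both hold. Furthermore, in this case one may take $G=\mathrm{Inn}(Q)'$ and, for any $e\in Q$, $f(g)=R_e^{-1}gR_e$ for $g\in G$.
   Context: A quandle is a set with operation $*$ satisfying $a*a=a$; unique right division; $(a*b)*c=(a*c)*(b*c)$. $R_a(y)=y*a$; $\mathrm{Inn}(Q)$ is the group generated by the $R_a$, and $Q$ is connected if it acts transitively. $\mathrm{Inn}(Q)'$ is its derived (commutator) subgroup, which is normal in $\mathrm{Inn}(Q)$, so $g\mapsto R_e^{-1}gR_e$ is an automorphism of it; $\mathrm{Stab}$ denotes the stabilizer under the natural action on $Q$. $\mathrm{GAlex}(G,f)$ is the quandle on a group $G$ with $a*b=f(ab^{-1})b$. *)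

theory Defs
  imports "HOL-Algebra.Algebra"
begin

definition quandle :: "'a set \<Rightarrow> ('a \<Rightarrow> 'a \<Rightarrow> 'a) \<Rightarrow> bool" where
  "quandle Q op \<longleftrightarrow>
     (\<forall>a\<in>Q. \<forall>b\<in>Q. op a b \<in> Q) \<and>
     (\<forall>a\<in>Q. op a a = a) \<and>
     (\<forall>a\<in>Q. \<forall>b\<in>Q. \<exists>!x. x \<in> Q \<and> op x a = b) \<and>
     (\<forall>a\<in>Q. \<forall>b\<in>Q. \<forall>c\<in>Q. op (op a b) c = op (op a c) (op b c))"

definition Rt :: "'a set \<Rightarrow> ('a \<Rightarrow> 'a \<Rightarrow> 'a) \<Rightarrow> 'a \<Rightarrow> ('a \<Rightarrow> 'a)" where
  "Rt Q op a = (\<lambda>y\<in>Q. op y a)"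

text \<open>The permutation group of Q, with products read left to right
  (right-action convention: g h means first g, then h).\<close>
definition RBij :: "'a set \<Rightarrow> ('a \<Rightarrow> 'a) monoid" where
  "RBij Q = \<lparr>carrier = Bij Q,
             monoid.mult = \<lambda>g\<in>Bij Q. \<lambda>h\<in>Bij Q. compose Q h g,
             one = \<lambda>x\<in>Q. x\<rparr>"

definition Inn :: "'a set \<Rightarrow> ('a \<Rightarrow> 'a \<Rightarrow> 'a) \<Rightarrow> ('a \<Rightarrow> 'a) set" where
  "Inn Q op = generate (RBij Q) (Rt Q op ` Q)"

definition InnGroup :: "'a set \<Rightarrow> ('a \<Rightarrow> 'a \<Rightarrow> 'a) \<Rightarrow> ('a \<Rightarrow> 'a) monoid" where
  "InnGroup Q op = (RBij Q)\<lparr>carrier := Inn Q op\<rparr>"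

definition InnD :: "'a set \<Rightarrow> ('a \<Rightarrow> 'a \<Rightarrow> 'a) \<Rightarrow> ('a \<Rightarrow> 'a) set" where
  "InnD Q op = derived (InnGroup Q op) (Inn Q op)"

definition InnDGroup :: "'a set \<Rightarrow> ('a \<Rightarrow> 'a \<Rightarrow> 'a) \<Rightarrow> ('a \<Rightarrow> 'a) monoid" where
  "InnDGroup Q op = (RBij Q)\<lparr>carrier := InnD Q op\<rparr>"

definition connected_quandle :: "'a set \<Rightarrow> ('a \<Rightarrow> 'a \<Rightarrow> 'a) \<Rightarrow> bool" where
  "connected_quandle Q op \<longleftrightarrow> quandle Q op \<and>
     (\<forall>x\<in>Q. \<forall>y\<in>Q. \<exists>g\<in>Inn Q op. g x = y)"

definition Stab :: "('a \<Rightarrow> 'a) set \<Rightarrow> 'a \<Rightarrow> ('a \<Rightarrow> 'a) set" where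
  "Stab H e = {g \<in> H. g e = e}"

definition conjR :: "'a set \<Rightarrow> ('a \<Rightarrow> 'a \<Rightarrow> 'a) \<Rightarrow> 'a \<Rightarrow> ('a \<Rightarrow> 'a) \<Rightarrow> ('a \<Rightarrow> 'a)" where
  "conjR Q op e = (\<lambda>g\<in>InnD Q op.
      inv\<^bsub>InnGroup Q op\<^esub> (Rt Q op e) \<otimes>\<^bsub>InnGroup Q op\<^esub> g \<otimes>\<^bsub>InnGroup Q op\<^esub> Rt Q op e)"

definition galex :: "('b, 'c) monoid_scheme \<Rightarrow> ('b \<Rightarrow> 'b) \<Rightarrow> 'b \<Rightarrow> 'b \<Rightarrow> 'b" where
  "galex G f a b = f (a \<otimes>\<^bsub>G\<^esub> inv\<^bsub>G\<^esub> b) \<otimes>\<^bsub>G\<^esub> b"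

definition quandle_iso :: "'a set \<Rightarrow> ('a \<Rightarrow> 'a \<Rightarrow> 'a) \<Rightarrow> 'b set \<Rightarrow> ('b \<Rightarrow> 'b \<Rightarrow> 'b) \<Rightarrow> bool" where
  "quandle_iso Q op Q' op' \<longleftrightarrow> (\<exists>\<phi>. bij_betw \<phi> Q Q' \<and>
     (\<forall>x\<in>Q. \<forall>y\<in>Q. \<phi> (op x y) = op' (\<phi> x) (\<phi> y)))"

end

(*
  The derived group Inn(Q)' acts transitively on a connected quandle Q: if h x = a with h in Inn(Q),
  then R_a agrees at x with the commutator of R_x^-1 and h^-1, because R_x fixes x.  So for finite Q,
  |Q| = |Inn(Q)'| iff every stabilizer in Inn(Q)' is trivial, iff each orbit map n |-> n e is a
  bijection Inn(Q)' -> Q.  In that case the orbit map is an isomorphism GAlex(Inn(Q)', f) -> Q for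
  f(g) = R_e^-1 g R_e, since f(a b^-1) b sends e to (a e) * (b e).
  Conversely, if Q = GAlex(G, f), every R_a acts on G as z |-> f(z) c, so every element of Inn(Q)
  acts as an affine map z |-> f^k(z) c.  The linear parts f^k commute and f has finite order, so
  commutators, and hence all of Inn(Q)', act by right translations z |-> z c, and a right
  translation with a fixed point is the identity.
*)
theory Submission
  imports Defs "HOL-Combinatorics.Cycles"
begin

section \<open>Permutation groups acting on the right\<close>

lemma compose_restrict_inv_into_Bij:
  "g \<in> Bij Q \<Longrightarrow> compose Q g (restrict (inv_into Q g) Q) = (\<lambda>x\<in>Q. x)"
  by (auto simp: Bij_def bij_betw_def compose_def f_inv_into_f intro!: restrict_ext)

lemma group_RBij: "group (RBij Q)"
  unfolding RBij_def
proof (rule groupI; simp)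
  show "\<exists>h\<in>Bij Q. compose Q g h = (\<lambda>x\<in>Q. x)" if "g \<in> Bij Q" for g
    using that compose_restrict_inv_into_Bij restrict_inv_into_Bij by blast
qed (auto simp: compose_Bij id_Bij Bij_imp_funcset Bij_imp_extensional compose_assoc
          intro: compose_Id)

interpretation RBij: group "RBij Q" for Q
  by (rule group_RBij)

lemma carrier_RBij [simp]: "carrier (RBij Q) = Bij Q"
  by (simp add: RBij_def)

lemma one_RBij: "\<one>\<^bsub>RBij Q\<^esub> = (\<lambda>x\<in>Q. x)"
  by (simp add: RBij_def)

lemma RBij_mult_apply:
  "g \<in> Bij Q \<Longrightarrow> h \<in> Bij Q \<Longrightarrow> x \<in> Q \<Longrightarrow> (g \<otimes>\<^bsub>RBij Q\<^esub> h) x = h (g x)"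
  by (simp add: RBij_def compose_def)

lemma Bij_apply_closed: "g \<in> Bij Q \<Longrightarrow> x \<in> Q \<Longrightarrow> g x \<in> Q"
  using Bij_imp_funcset by fast

lemma Bij_eqI: "g \<in> Bij Q \<Longrightarrow> h \<in> Bij Q \<Longrightarrow> (\<And>x. x \<in> Q \<Longrightarrow> g x = h x) \<Longrightarrow> g = h"
  using Bij_imp_extensional extensionalityI by metis

lemma inv_RBij: "g \<in> Bij Q \<Longrightarrow> inv\<^bsub>RBij Q\<^esub> g = restrict (inv_into Q g) Q"
  by (rule group.inv_equality[OF group_RBij])
     (simp_all add: RBij_def restrict_inv_into_Bij compose_restrict_inv_into_Bij)

lemma inv_RBij_Bij: "g \<in> Bij Q \<Longrightarrow> inv\<^bsub>RBij Q\<^esub> g \<in> Bij Q"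
  by (simp add: inv_RBij restrict_inv_into_Bij)

lemma RBij_apply_inv: "g \<in> Bij Q \<Longrightarrow> x \<in> Q \<Longrightarrow> g ((inv\<^bsub>RBij Q\<^esub> g) x) = x"
  by (simp add: inv_RBij Bij_def bij_betw_def f_inv_into_f)

lemma RBij_inv_apply: "g \<in> Bij Q \<Longrightarrow> x \<in> Q \<Longrightarrow> (inv\<^bsub>RBij Q\<^esub> g) (g x) = x"
  by (simp add: inv_RBij Bij_def bij_betw_def Bij_apply_closed)

lemma Stab_eq_idI:
  assumes "(\<lambda>x\<in>Q. x) \<in> H" "e \<in> Q" "\<And>n. n \<in> H \<Longrightarrow> n e = e \<Longrightarrow> n = (\<lambda>x\<in>Q. x)"
  shows "Stab H e = {\<lambda>x\<in>Q. x}"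
proof (intro equalityI subsetI)
  show "n \<in> {\<lambda>x\<in>Q. x}" if "n \<in> Stab H e" for n
    using that assms(3) by (simp add: Stab_def)
  show "n \<in> Stab H e" if "n \<in> {\<lambda>x\<in>Q. x}" for n
    using that assms(1,2) by (simp add: Stab_def)
qed

lemma Stab_trivial_iff_inj_on:
  assumes H: "subgroup H (RBij Q)" and e: "e \<in> Q"
  shows "Stab H e = {\<lambda>x\<in>Q. x} \<longleftrightarrow> inj_on (\<lambda>n. n e) H"
proof
  have sub: "H \<subseteq> Bij Q" and one: "(\<lambda>x\<in>Q. x) \<in> H"
    using subgroup.subset[OF H] subgroup.one_closed[OF H] by (auto simp: one_RBij)
  show "inj_on (\<lambda>n. n e) H" if stab: "Stab H e = {\<lambda>x\<in>Q. x}"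
  proof (rule inj_onI)
    fix a b assume a: "a \<in> H" and b: "b \<in> H" and ab: "a e = b e"
    let ?c = "a \<otimes>\<^bsub>RBij Q\<^esub> inv\<^bsub>RBij Q\<^esub> b"
    have c: "?c \<in> H"
      using a b H by (simp add: subgroup.m_closed subgroup.m_inv_closed)
    have aB: "a \<in> Bij Q" and bB: "b \<in> Bij Q"
      using a b sub by auto
    have "?c e = e"
      using RBij_mult_apply[OF aB inv_RBij_Bij[OF bB] e] RBij_inv_apply[OF bB e] ab by simp
    then have "?c = \<one>\<^bsub>RBij Q\<^esub>"
      using c stab unfolding Stab_def one_RBij by auto
    then show "a = b"
      using aB bB RBij.inv_equality[of Q a "inv\<^bsub>RBij Q\<^esub> b"] RBij.inv_inv[of b Q]
      by (simp add: inv_RBij_Bij)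
  qed
  show "Stab H e = {\<lambda>x\<in>Q. x}" if inj: "inj_on (\<lambda>n. n e) H"
  proof (rule Stab_eq_idI[OF one e])
    show "n = (\<lambda>x\<in>Q. x)" if "n \<in> H" "n e = e" for n
      by (rule inj_onD[OF inj _ that(1) one]) (simp add: that(2) e)
  qed
qed

lemma card_eq_iff_Stab_trivial:
  assumes H: "subgroup H (RBij Q)" and Q: "finite Q" and e: "e \<in> Q"
    and orbit: "(\<lambda>n. n e) ` H = Q"
  shows "card H = card Q \<longleftrightarrow> Stab H e = {\<lambda>x\<in>Q. x}"
proof -
  have "card H = card Q \<longleftrightarrow> inj_on (\<lambda>n. n e) H"
  proof
    assume card: "card H = card Q"
    then have "finite H"
      using Q e card_gt_0_iff by fastforce
    then show "inj_on (\<lambda>n. n e) H"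
      using inj_on_iff_eq_card[of H "\<lambda>n. n e"] card orbit by simp
  next
    assume "inj_on (\<lambda>n. n e) H"
    then show "card H = card Q"
      using card_image orbit by fastforce
  qed
  then show ?thesis
    using Stab_trivial_iff_inj_on[OF H e] by simp
qed

lemma (in group) conjugation_in_auto_normal:
  assumes N: "N \<lhd> G" and r: "r \<in> carrier G"
  shows "(\<lambda>g\<in>N. inv r \<otimes> g \<otimes> r) \<in> auto (G\<lparr>carrier := N\<rparr>)"
proof -
  interpret N: normal N G
    by (rule N)
  let ?c = "\<lambda>g\<in>N. inv r \<otimes> g \<otimes> r"
  have closed: "?c g \<in> N" if "g \<in> N" for g
    using N.inv_op_closed1[OF r that] that by simp
  have cancel: "r \<otimes> (inv r \<otimes> z) = z" "inv r \<otimes> (r \<otimes> z) = z" if "z \<in> carrier G" for z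
    using r that by (simp_all add: m_assoc[symmetric])
  have "?c \<in> hom (G\<lparr>carrier := N\<rparr>) (G\<lparr>carrier := N\<rparr>)"
  proof (rule homI)
    show "?c (x \<otimes>\<^bsub>G\<lparr>carrier := N\<rparr>\<^esub> y) = ?c x \<otimes>\<^bsub>G\<lparr>carrier := N\<rparr>\<^esub> ?c y"
      if "x \<in> carrier (G\<lparr>carrier := N\<rparr>)" "y \<in> carrier (G\<lparr>carrier := N\<rparr>)" for x y
      using that r N.subset N.m_closed by (simp add: subset_iff m_assoc cancel)
  qed (use closed in simp)
  moreover have "inj_on ?c N"
    using r N.subset by (intro inj_onI) (simp add: subset_iff)
  moreover have "?c ` N = N"
  proof (intro equalityI subsetI)
    show "g \<in> N" if "g \<in> ?c ` N" for g
      using that closed by blast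
    show "g \<in> ?c ` N" if g: "g \<in> N" for g
    proof
      show "r \<otimes> g \<otimes> inv r \<in> N"
        using N.inv_op_closed2[OF r g] .
      then show "g = ?c (r \<otimes> g \<otimes> inv r)"
        using r g N.subset by (simp add: subset_iff m_assoc cancel)
    qed
  qed
  ultimately show ?thesis
    by (simp add: auto_def Bij_def bij_betw_def)
qed

lemma quandle_isoI_inverse:
  assumes psi: "bij_betw psi B Q"
    and closed: "\<And>a b. a \<in> B \<Longrightarrow> b \<in> B \<Longrightarrow> op' a b \<in> B"
    and hom: "\<And>a b. a \<in> B \<Longrightarrow> b \<in> B \<Longrightarrow> psi (op' a b) = op (psi a) (psi b)"
  shows "quandle_iso Q op B op'"
proof -
  let ?phi = "inv_into B psi"
  have phi: "bij_betw ?phi Q B"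
    using bij_betw_inv_into[OF psi] .
  have "?phi (op x y) = op' (?phi x) (?phi y)" if "x \<in> Q" "y \<in> Q" for x y
  proof -
    have xy: "?phi x \<in> B" "?phi y \<in> B"
      using bij_betw_apply[OF phi] that by auto
    have "psi (?phi x) = x" "psi (?phi y) = y"
      using bij_betw_inv_into_right[OF psi] that by auto
    then have "op x y = psi (op' (?phi x) (?phi y))"
      using hom[OF xy] by simp
    then show ?thesis
      using bij_betw_inv_into_left[OF psi closed[OF xy]] by simp
  qed
  then show ?thesis
    unfolding quandle_iso_def using phi by blast
qed

lemma subgroup_agreeing_pointwise:
  assumes N: "subgroup N (RBij Q)"
  shows "subgroup {g \<in> Bij Q. \<forall>x\<in>Q. \<exists>n\<in>N. n x = g x} (RBij Q)"
    (is "subgroup ?A _")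
proof -
  have NB: "N \<subseteq> Bij Q"
    using subgroup.subset[OF N] by simp
  have "(\<lambda>x\<in>Q. x) \<in> N"
    using subgroup.one_closed[OF N] by (simp add: one_RBij)
  then have "(\<lambda>x\<in>Q. x) \<in> ?A"
    using id_Bij by blast
  moreover have "inv\<^bsub>RBij Q\<^esub> g \<in> ?A" if g: "g \<in> ?A" for g
  proof -
    have "\<exists>n\<in>N. n x = (inv\<^bsub>RBij Q\<^esub> g) x" if x: "x \<in> Q" for x
    proof -
      let ?y = "(inv\<^bsub>RBij Q\<^esub> g) x"
      have y: "?y \<in> Q"
        using g Bij_apply_closed[OF inv_RBij_Bij x] by blast
      obtain n where n: "n \<in> N" "n ?y = g ?y"
        using g y by blast
      have "(inv\<^bsub>RBij Q\<^esub> n) x = ?y"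
        using RBij_inv_apply[of n Q ?y] NB n y RBij_apply_inv[of g Q x] g x by auto
      then show ?thesis
        using subgroup.m_inv_closed[OF N n(1)] by blast
    qed
    then show ?thesis
      using g inv_RBij_Bij by blast
  qed
  moreover have "g \<otimes>\<^bsub>RBij Q\<^esub> h \<in> ?A" if g: "g \<in> ?A" and h: "h \<in> ?A" for g h
  proof -
    have "\<exists>n\<in>N. n x = (g \<otimes>\<^bsub>RBij Q\<^esub> h) x" if x: "x \<in> Q" for x
    proof -
      obtain n1 where n1: "n1 \<in> N" "n1 x = g x"
        using g x by blast
      obtain n2 where n2: "n2 \<in> N" "n2 (g x) = h (g x)"
        using h g Bij_apply_closed[OF _ x] by blast
      have "(n1 \<otimes>\<^bsub>RBij Q\<^esub> n2) x = (g \<otimes>\<^bsub>RBij Q\<^esub> h) x"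
        using n1 n2 NB x g h by (simp add: subset_iff RBij_mult_apply)
      then show ?thesis
        using subgroup.m_closed[OF N n1(1) n2(1)] by blast
    qed
    then show ?thesis
      using RBij.m_closed[of g Q h] g h by simp
  qed
  ultimately show ?thesis
    by (intro RBij.subgroupI) auto
qed

section \<open>The inner automorphism group and its derived subgroup\<close>

definition quandle_auto :: "'a set \<Rightarrow> ('a \<Rightarrow> 'a \<Rightarrow> 'a) \<Rightarrow> ('a \<Rightarrow> 'a) set" where
  "quandle_auto Q op = {g \<in> Bij Q. \<forall>x\<in>Q. \<forall>y\<in>Q. g (op x y) = op (g x) (g y)}"

lemma subgroup_quandle_auto:
  assumes op: "op \<in> Q \<rightarrow> Q \<rightarrow> Q"
  shows "subgroup (quandle_auto Q op) (RBij Q)"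
proof -
  have closed: "op x y \<in> Q" if "x \<in> Q" "y \<in> Q" for x y
    using op that by blast
  have "(\<lambda>x\<in>Q. x) \<in> quandle_auto Q op"
    using closed by (simp add: quandle_auto_def id_Bij)
  moreover have "inv\<^bsub>RBij Q\<^esub> g \<in> quandle_auto Q op" if "g \<in> quandle_auto Q op" for g
  proof -
    have g: "g \<in> Bij Q" "\<And>x y. x \<in> Q \<Longrightarrow> y \<in> Q \<Longrightarrow> g (op x y) = op (g x) (g y)"
      using that by (auto simp: quandle_auto_def)
    have "inv_into Q g (op x y) = op (inv_into Q g x) (inv_into Q g y)" if "x \<in> Q" "y \<in> Q" for x y
      using Bij_inv_into_lemma[OF g(2) g(1) op that] .
    then show ?thesis
      using g(1) closed by (simp add: quandle_auto_def inv_RBij restrict_inv_into_Bij Bij_inv_into_mem)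
  qed
  moreover have "g \<otimes>\<^bsub>RBij Q\<^esub> h \<in> quandle_auto Q op"
    if "g \<in> quandle_auto Q op" "h \<in> quandle_auto Q op" for g h
  proof -
    have "g \<in> Bij Q" "h \<in> Bij Q"
      and "\<And>x y. x \<in> Q \<Longrightarrow> y \<in> Q \<Longrightarrow> g (op x y) = op (g x) (g y)"
      and "\<And>x y. x \<in> Q \<Longrightarrow> y \<in> Q \<Longrightarrow> h (op x y) = op (h x) (h y)"
      using that by (auto simp: quandle_auto_def)
    then show ?thesis
      using closed RBij.m_closed[of g Q h] by (simp add: quandle_auto_def RBij_mult_apply Bij_apply_closed)
  qed
  ultimately show ?thesis
    by (intro RBij.subgroupI) (auto simp: quandle_auto_def)
qed

locale quandle_on =
  fixes Q :: "'a set" and op :: "'a \<Rightarrow> 'a \<Rightarrow> 'a"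
  assumes quandle: "quandle Q op"
begin

lemma op_closed: "a \<in> Q \<Longrightarrow> b \<in> Q \<Longrightarrow> op a b \<in> Q"
  using quandle unfolding quandle_def by blast

lemma op_idem: "a \<in> Q \<Longrightarrow> op a a = a"
  using quandle unfolding quandle_def by blast

lemma op_right_div: "a \<in> Q \<Longrightarrow> b \<in> Q \<Longrightarrow> \<exists>!x. x \<in> Q \<and> op x a = b"
  using quandle unfolding quandle_def by blast

lemma op_right_cancel:
  assumes "a \<in> Q" "x \<in> Q" "y \<in> Q" "op x a = op y a"
  shows "x = y"
  using op_right_div[OF assms(1) op_closed[OF assms(2,1)]] assms(2-4) by (auto elim!: ex1E)

lemma op_self_distrib:
  "a \<in> Q \<Longrightarrow> b \<in> Q \<Longrightarrow> c \<in> Q \<Longrightarrow> op (op a b) c = op (op a c) (op b c)"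
  using quandle unfolding quandle_def by blast

lemma Rt_apply [simp]: "y \<in> Q \<Longrightarrow> Rt Q op a y = op y a"
  by (simp add: Rt_def)

lemma Rt_fixes: "a \<in> Q \<Longrightarrow> Rt Q op a a = a"
  by (simp add: op_idem)

lemma Rt_Bij:
  assumes a: "a \<in> Q"
  shows "Rt Q op a \<in> Bij Q"
proof -
  have "inj_on (\<lambda>y. op y a) Q"
  proof (rule inj_onI)
    show "x = y" if "x \<in> Q" "y \<in> Q" "op x a = op y a" for x y
      using op_right_cancel[OF a that] .
  qed
  moreover have "(\<lambda>y. op y a) ` Q = Q"
    using op_right_div[OF a] op_closed[OF _ a] by blast
  ultimately show ?thesis
    by (simp add: Bij_def Rt_def bij_betw_def)
qed

lemma subgroup_Inn: "subgroup (Inn Q op) (RBij Q)"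
  unfolding Inn_def by (rule RBij.generate_is_subgroup) (auto simp: Rt_Bij)

lemma Rt_in_Inn: "a \<in> Q \<Longrightarrow> Rt Q op a \<in> Inn Q op"
  unfolding Inn_def by (rule generate.incl) simp

lemma Inn_subset_Bij: "Inn Q op \<subseteq> Bij Q"
  using subgroup.subset[OF subgroup_Inn] by simp

lemma mult_InnGroup [simp]: "g \<otimes>\<^bsub>InnGroup Q op\<^esub> h = g \<otimes>\<^bsub>RBij Q\<^esub> h"
  by (simp add: InnGroup_def)

lemma group_InnGroup: "group (InnGroup Q op)"
  unfolding InnGroup_def by (rule subgroup.subgroup_is_group[OF subgroup_Inn group_RBij])

lemma inv_InnGroup: "g \<in> Inn Q op \<Longrightarrow> inv\<^bsub>InnGroup Q op\<^esub> g = inv\<^bsub>RBij Q\<^esub> g"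
  unfolding InnGroup_def by (rule RBij.m_inv_consistent[OF subgroup_Inn])

lemma InnD_eq_derived: "InnD Q op = derived (RBij Q) (Inn Q op)"
  unfolding InnD_def InnGroup_def by (rule RBij.derived_consistent[OF _ subgroup_Inn]) simp

lemma subgroup_InnD: "subgroup (InnD Q op) (RBij Q)"
  unfolding InnD_eq_derived using RBij.derived_is_subgroup Inn_subset_Bij by simp

lemma InnD_subset_Inn: "InnD Q op \<subseteq> Inn Q op"
  unfolding InnD_eq_derived by (rule RBij.derived_incl[OF _ subgroup_Inn]) simp

lemma InnD_subset_Bij: "InnD Q op \<subseteq> Bij Q"
  using InnD_subset_Inn Inn_subset_Bij by blast

lemma normal_InnD: "InnD Q op \<lhd> InnGroup Q op"
  unfolding InnD_eq_derived InnGroup_def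
  by (rule RBij.derived_subgroup_is_normal[OF subgroup_Inn])

lemma group_InnDGroup: "group (InnDGroup Q op)"
  unfolding InnDGroup_def by (rule subgroup.subgroup_is_group[OF subgroup_InnD group_RBij])

lemma carrier_InnDGroup [simp]: "carrier (InnDGroup Q op) = InnD Q op"
  by (simp add: InnDGroup_def)

lemma mult_InnDGroup [simp]: "g \<otimes>\<^bsub>InnDGroup Q op\<^esub> h = g \<otimes>\<^bsub>RBij Q\<^esub> h"
  by (simp add: InnDGroup_def)

lemma inv_InnDGroup: "g \<in> InnD Q op \<Longrightarrow> inv\<^bsub>InnDGroup Q op\<^esub> g = inv\<^bsub>RBij Q\<^esub> g"
  unfolding InnDGroup_def by (rule RBij.m_inv_consistent[OF subgroup_InnD])

lemma Rt_in_quandle_auto: "a \<in> Q \<Longrightarrow> Rt Q op a \<in> quandle_auto Q op"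
  by (simp add: quandle_auto_def Rt_Bij op_closed op_self_distrib[of _ _ a])

lemma Inn_subset_quandle_auto: "Inn Q op \<subseteq> quandle_auto Q op"
  unfolding Inn_def
proof (rule RBij.generate_subgroup_incl)
  show "subgroup (quandle_auto Q op) (RBij Q)"
    using op_closed by (intro subgroup_quandle_auto) blast
qed (use Rt_in_quandle_auto in blast)

lemma Inn_hom: "g \<in> Inn Q op \<Longrightarrow> x \<in> Q \<Longrightarrow> y \<in> Q \<Longrightarrow> g (op x y) = op (g x) (g y)"
  using Inn_subset_quandle_auto by (auto simp: quandle_auto_def)

lemma commutator_in_InnD:
  "g \<in> Inn Q op \<Longrightarrow> h \<in> Inn Q op \<Longrightarrow>
    g \<otimes>\<^bsub>RBij Q\<^esub> h \<otimes>\<^bsub>RBij Q\<^esub> inv\<^bsub>RBij Q\<^esub> g \<otimes>\<^bsub>RBij Q\<^esub> inv\<^bsub>RBij Q\<^esub> h \<in> InnD Q op"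
  unfolding InnD_eq_derived derived_def by (rule generate.incl) blast

lemma conjR_auto:
  assumes e: "e \<in> Q"
  shows "conjR Q op e \<in> auto (InnDGroup Q op)"
proof -
  have "InnDGroup Q op = (InnGroup Q op)\<lparr>carrier := InnD Q op\<rparr>"
    by (simp add: InnDGroup_def InnGroup_def)
  moreover have "Rt Q op e \<in> carrier (InnGroup Q op)"
    using Rt_in_Inn[OF e] by (simp add: InnGroup_def)
  ultimately show ?thesis
    using group.conjugation_in_auto_normal[OF group_InnGroup normal_InnD] by (simp add: conjR_def)
qed

lemma conjR_apply:
  assumes e: "e \<in> Q" and g: "g \<in> InnD Q op" and x: "x \<in> Q"
  shows "conjR Q op e g x = op (g ((inv\<^bsub>RBij Q\<^esub> (Rt Q op e)) x)) e"
proof -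
  have R: "Rt Q op e \<in> Bij Q" and gB: "g \<in> Bij Q"
    using Rt_Bij[OF e] g InnD_subset_Bij by auto
  have "g ((inv\<^bsub>RBij Q\<^esub> (Rt Q op e)) x) \<in> Q"
    using Bij_apply_closed[OF gB Bij_apply_closed[OF inv_RBij_Bij[OF R] x]] .
  then show ?thesis
    using g x R gB
    by (simp add: conjR_def inv_InnGroup[OF Rt_in_Inn[OF e]] RBij_mult_apply
        inv_RBij_Bij RBij.m_closed[simplified] Bij_apply_closed)
qed

lemma galex_conjR_apply:
  assumes e: "e \<in> Q" and a: "a \<in> InnD Q op" and b: "b \<in> InnD Q op"
  shows "galex (InnDGroup Q op) (conjR Q op e) a b e = op (a e) (b e)"
proof -
  let ?ib = "inv\<^bsub>RBij Q\<^esub> b"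
  have aB: "a \<in> Bij Q" and bB: "b \<in> Bij Q" and ibB: "?ib \<in> Bij Q"
    using a b InnD_subset_Bij inv_RBij_Bij by auto
  have c: "a \<otimes>\<^bsub>RBij Q\<^esub> ?ib \<in> InnD Q op"
    using a b subgroup_InnD by (simp add: subgroup.m_closed subgroup.m_inv_closed)
  then have cB: "conjR Q op e (a \<otimes>\<^bsub>RBij Q\<^esub> ?ib) \<in> Bij Q"
    using conjR_auto[OF e] InnD_subset_Bij by (auto simp: auto_def hom_def)
  have iRe: "(inv\<^bsub>RBij Q\<^esub> (Rt Q op e)) e = e"
    using RBij_inv_apply[OF Rt_Bij[OF e] e] Rt_fixes[OF e] by simp
  have iba: "?ib (a e) \<in> Q"
    using Bij_apply_closed[OF ibB Bij_apply_closed[OF aB e]] .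
  have "galex (InnDGroup Q op) (conjR Q op e) a b e = b (op (?ib (a e)) e)"
    using cB bB
    by (simp add: galex_def inv_InnDGroup[OF b] RBij_mult_apply e conjR_apply[OF e c e] iRe aB ibB)
  also have "\<dots> = op (a e) (b e)"
    using Inn_hom[OF subsetD[OF InnD_subset_Inn b] iba e] RBij_apply_inv[OF bB Bij_apply_closed[OF aB e]]
    by simp
  finally show ?thesis .
qed

end

section \<open>Connected quandles\<close>

locale connected_quandle_on = quandle_on +
  assumes connected: "\<forall>x\<in>Q. \<forall>y\<in>Q. \<exists>g\<in>Inn Q op. g x = y"
begin

text \<open>If \<open>h x = a\<close>, then \<open>R\<^sub>a = h\<^sup>-\<^sup>1 R\<^sub>x h\<close> (products read left to right), and on \<open>x\<close> this
  agrees with the commutator \<open>R\<^sub>x\<^sup>-\<^sup>1 h\<^sup>-\<^sup>1 R\<^sub>x h\<close> because \<open>R\<^sub>x\<close> fixes \<open>x\<close>.\<close>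
lemma Rt_agrees_with_InnD:
  assumes a: "a \<in> Q" and x: "x \<in> Q"
  shows "\<exists>n\<in>InnD Q op. n x = Rt Q op a x"
proof -
  obtain h where h: "h \<in> Inn Q op" "h x = a"
    using connected a x by blast
  let ?R = "Rt Q op x"
  let ?iR = "inv\<^bsub>RBij Q\<^esub> ?R" and ?ih = "inv\<^bsub>RBij Q\<^esub> h"
  have R: "?R \<in> Bij Q" and hB: "h \<in> Bij Q" and iR: "?iR \<in> Bij Q" and ih: "?ih \<in> Bij Q"
    using Rt_Bij[OF x] h(1) Inn_subset_Bij inv_RBij_Bij by auto
  define n where "n = ?iR \<otimes>\<^bsub>RBij Q\<^esub> ?ih \<otimes>\<^bsub>RBij Q\<^esub> ?R \<otimes>\<^bsub>RBij Q\<^esub> h"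
  have "n \<in> InnD Q op"
    using commutator_in_InnD[of ?iR ?ih] subgroup.m_inv_closed[OF subgroup_Inn] Rt_in_Inn[OF x] h(1)
      RBij.inv_inv R hB by (simp add: n_def)
  moreover have "n x = Rt Q op a x"
  proof -
    have iRx: "?iR x = x"
      using RBij_inv_apply[OF R x] Rt_fixes[OF x] by simp
    have ihx: "?ih x \<in> Q"
      using Bij_apply_closed[OF ih x] .
    have "n x = h (?R (?ih x))"
      using iRx by (simp add: n_def RBij_mult_apply RBij.m_closed[simplified] R hB iR ih x)
    also have "\<dots> = op (h (?ih x)) (h x)"
      using Inn_hom[OF h(1) ihx x] ihx by simp
    also have "\<dots> = Rt Q op a x"
      using RBij_apply_inv[OF hB x] h(2) x by simp
    finally show ?thesis .
  qed
  ultimately show ?thesis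
    by blast
qed

lemma InnD_transitive:
  assumes x: "x \<in> Q" and y: "y \<in> Q"
  shows "\<exists>n\<in>InnD Q op. n x = y"
proof -
  have "Inn Q op \<subseteq> {g \<in> Bij Q. \<forall>x\<in>Q. \<exists>n\<in>InnD Q op. n x = g x}"
    unfolding Inn_def
    by (rule RBij.generate_subgroup_incl[OF _ subgroup_agreeing_pointwise[OF subgroup_InnD]])
       (use Rt_Bij Rt_agrees_with_InnD in blast)
  moreover obtain g where "g \<in> Inn Q op" "g x = y"
    using connected x y by blast
  ultimately show ?thesis
    using x by blast
qed

lemma orbit_InnD:
  assumes e: "e \<in> Q"
  shows "(\<lambda>n. n e) ` InnD Q op = Q"
proof (intro equalityI subsetI)
  show "y \<in> Q" if y: "y \<in> (\<lambda>n. n e) ` InnD Q op" for y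
  proof -
    obtain n where n: "n \<in> InnD Q op" "y = n e"
      using y by blast
    show ?thesis
      using Bij_apply_closed[OF subsetD[OF InnD_subset_Bij n(1)] e] n(2) by simp
  qed
  show "y \<in> (\<lambda>n. n e) ` InnD Q op" if "y \<in> Q" for y
    using InnD_transitive[OF e that] by (auto simp: image_iff)
qed

lemma card_eq_card_InnD_iff:
  assumes "finite Q" "Q \<noteq> {}"
  shows "card Q = card (InnD Q op) \<longleftrightarrow> (\<forall>e\<in>Q. Stab (InnD Q op) e = {\<lambda>x\<in>Q. x})"
proof -
  have iff: "card (InnD Q op) = card Q \<longleftrightarrow> Stab (InnD Q op) e = {\<lambda>x\<in>Q. x}" if e: "e \<in> Q" for e
    using card_eq_iff_Stab_trivial[OF subgroup_InnD assms(1) e orbit_InnD[OF e]] .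
  obtain e where e: "e \<in> Q"
    using assms(2) by blast
  show ?thesis
  proof
    assume "card Q = card (InnD Q op)"
    then show "\<forall>e\<in>Q. Stab (InnD Q op) e = {\<lambda>x\<in>Q. x}"
      using iff by simp
  next
    assume "\<forall>e\<in>Q. Stab (InnD Q op) e = {\<lambda>x\<in>Q. x}"
    then show "card Q = card (InnD Q op)"
      using iff[OF e] e by simp
  qed
qed

lemma quandle_iso_galex_InnD:
  assumes e: "e \<in> Q" and stab: "Stab (InnD Q op) e = {\<lambda>x\<in>Q. x}"
  shows "quandle_iso Q op (InnD Q op) (galex (InnDGroup Q op) (conjR Q op e))"
proof (rule quandle_isoI_inverse[where psi = "\<lambda>n. n e"])
  show "bij_betw (\<lambda>n. n e) (InnD Q op) Q"
    using Stab_trivial_iff_inj_on[OF subgroup_InnD e] stab orbit_InnD[OF e]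
    by (simp add: bij_betw_def)
  show "galex (InnDGroup Q op) (conjR Q op e) a b \<in> InnD Q op"
    if "a \<in> InnD Q op" "b \<in> InnD Q op" for a b
  proof -
    interpret D: group "InnDGroup Q op"
      by (rule group_InnDGroup)
    have "conjR Q op e \<in> hom (InnDGroup Q op) (InnDGroup Q op)"
      using conjR_auto[OF e] by (simp add: auto_def)
    moreover have "a \<otimes>\<^bsub>InnDGroup Q op\<^esub> inv\<^bsub>InnDGroup Q op\<^esub> b \<in> carrier (InnDGroup Q op)"
      using that by (intro D.m_closed D.inv_closed) simp_all
    ultimately have "conjR Q op e (a \<otimes>\<^bsub>InnDGroup Q op\<^esub> inv\<^bsub>InnDGroup Q op\<^esub> b) \<in> carrier (InnDGroup Q op)"
      by (rule hom_in_carrier)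
    then show ?thesis
      using that D.m_closed[of _ b] unfolding galex_def by simp
  qed
qed (use galex_conjR_apply[OF e] in simp)

end

section \<open>Quandles isomorphic to generalized Alexander quandles\<close>

lemma funpow_periodic_on_finite:
  assumes S: "finite S" and f: "bij_betw f S S"
  shows "\<exists>m>0. \<forall>z\<in>S. (f ^^ m) z = z"
proof -
  define p where "p z = (if z \<in> S then f z else z)" for z
  have "bij_betw p S S"
    using f by (rule bij_betw_cong[THEN iffD1, rotated]) (simp add: p_def)
  then have "p permutes S"
    by (rule bij_imp_permutes) (simp add: p_def)
  then obtain m where m: "p ^^ m = id" "m > 0"
    using S permutation_permutes permutation_is_nilpotent by metis
  have "\<forall>z\<in>S. (p ^^ k) z = (f ^^ k) z \<and> (f ^^ k) z \<in> S" for k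
    by (induction k) (auto simp: p_def bij_betw_apply[OF f])
  then show ?thesis
    using m by (metis id_apply)
qed

locale galex_iso = quandle_on Q op + G: group G
  for Q :: "'a set" and op and G :: "('b, 'c) monoid_scheme" +
  fixes f :: "'b \<Rightarrow> 'b" and phi :: "'a \<Rightarrow> 'b" and m :: nat
  assumes f_auto: "f \<in> auto G"
    and f_period: "0 < m" "\<And>z. z \<in> carrier G \<Longrightarrow> (f ^^ m) z = z"
    and phi_bij: "bij_betw phi Q (carrier G)"
    and phi_hom: "\<And>x y. x \<in> Q \<Longrightarrow> y \<in> Q \<Longrightarrow> phi (op x y) = galex G f (phi x) (phi y)"
begin

lemma phi_closed: "x \<in> Q \<Longrightarrow> phi x \<in> carrier G"
  using bij_betw_apply[OF phi_bij] .

lemma f_hom: "f \<in> hom G G"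
  using f_auto by (simp add: auto_def)

lemma f_closed: "z \<in> carrier G \<Longrightarrow> f z \<in> carrier G"
  using hom_in_carrier[OF f_hom] .

lemma funpow_f_closed: "z \<in> carrier G \<Longrightarrow> (f ^^ k) z \<in> carrier G"
  using f_auto by (induction k) (auto simp: auto_def Bij_def bij_betw_apply)

lemma funpow_f_mult:
  "x \<in> carrier G \<Longrightarrow> y \<in> carrier G \<Longrightarrow> (f ^^ k) (x \<otimes>\<^bsub>G\<^esub> y) = (f ^^ k) x \<otimes>\<^bsub>G\<^esub> (f ^^ k) y"
  using f_auto by (induction k) (auto simp: auto_def hom_mult funpow_f_closed)

lemma funpow_f_period: "z \<in> carrier G \<Longrightarrow> (f ^^ (m * j)) z = z"
  by (induction j) (simp_all add: funpow_add f_period(2))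

definition affine :: "nat \<Rightarrow> ('a \<Rightarrow> 'a) \<Rightarrow> bool" where
  "affine k g \<longleftrightarrow> (\<exists>c\<in>carrier G. \<forall>x\<in>Q. phi (g x) = (f ^^ k) (phi x) \<otimes>\<^bsub>G\<^esub> c)"

lemma affine_id: "affine 0 (\<lambda>x\<in>Q. x)"
  unfolding affine_def using phi_closed by (intro bexI[of _ "\<one>\<^bsub>G\<^esub>"]) auto

lemma affine_Rt:
  assumes a: "a \<in> Q"
  shows "affine 1 (Rt Q op a)"
proof -
  let ?c = "f (inv\<^bsub>G\<^esub> phi a) \<otimes>\<^bsub>G\<^esub> phi a"
  have "phi (Rt Q op a x) = f (phi x) \<otimes>\<^bsub>G\<^esub> ?c" if x: "x \<in> Q" for x
  proof -
    have "phi (Rt Q op a x) = f (phi x \<otimes>\<^bsub>G\<^esub> inv\<^bsub>G\<^esub> phi a) \<otimes>\<^bsub>G\<^esub> phi a"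
      using phi_hom[OF x a] x by (simp add: galex_def)
    also have "\<dots> = f (phi x) \<otimes>\<^bsub>G\<^esub> ?c"
      using phi_closed[OF x] phi_closed[OF a]
      by (simp add: hom_mult[OF f_hom] f_closed G.m_assoc)
    finally show ?thesis .
  qed
  moreover have "?c \<in> carrier G"
    using phi_closed[OF a] by (simp add: f_closed)
  ultimately show ?thesis
    unfolding affine_def by auto
qed

lemma affine_mult:
  assumes g: "g \<in> Bij Q" and h: "h \<in> Bij Q" and "affine k g" "affine l h"
  shows "affine (l + k) (g \<otimes>\<^bsub>RBij Q\<^esub> h)"
proof -
  obtain c where c: "c \<in> carrier G" "\<And>x. x \<in> Q \<Longrightarrow> phi (g x) = (f ^^ k) (phi x) \<otimes>\<^bsub>G\<^esub> c"
    using \<open>affine k g\<close> unfolding affine_def by blast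
  obtain d where d: "d \<in> carrier G" "\<And>x. x \<in> Q \<Longrightarrow> phi (h x) = (f ^^ l) (phi x) \<otimes>\<^bsub>G\<^esub> d"
    using \<open>affine l h\<close> unfolding affine_def by blast
  have "phi ((g \<otimes>\<^bsub>RBij Q\<^esub> h) x) = (f ^^ (l + k)) (phi x) \<otimes>\<^bsub>G\<^esub> ((f ^^ l) c \<otimes>\<^bsub>G\<^esub> d)"
    if x: "x \<in> Q" for x
  proof -
    have "phi ((g \<otimes>\<^bsub>RBij Q\<^esub> h) x) = (f ^^ l) ((f ^^ k) (phi x) \<otimes>\<^bsub>G\<^esub> c) \<otimes>\<^bsub>G\<^esub> d"
      using RBij_mult_apply[OF g h x] c(2)[OF x] d(2)[OF Bij_apply_closed[OF g x]] by simp
    also have "\<dots> = (f ^^ (l + k)) (phi x) \<otimes>\<^bsub>G\<^esub> ((f ^^ l) c \<otimes>\<^bsub>G\<^esub> d)"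
      using phi_closed[OF x] c(1) d(1)
      by (simp add: funpow_f_mult funpow_f_closed funpow_add G.m_assoc)
    finally show ?thesis .
  qed
  moreover have "(f ^^ l) c \<otimes>\<^bsub>G\<^esub> d \<in> carrier G"
    using c(1) d(1) by (simp add: funpow_f_closed)
  ultimately show ?thesis
    unfolding affine_def by blast
qed

text \<open>Since \<open>f\<^sup>m\<close> is the identity, \<open>f\<^sup>(\<^sup>m\<^sup>-\<^sup>1\<^sup>)\<^sup>k\<close> inverts \<open>f\<^sup>k\<close>.\<close>
lemma affine_inv:
  assumes g: "g \<in> Bij Q" and "affine k g"
  shows "affine ((m - 1) * k) (inv\<^bsub>RBij Q\<^esub> g)"
proof -
  obtain c where c: "c \<in> carrier G" "\<And>x. x \<in> Q \<Longrightarrow> phi (g x) = (f ^^ k) (phi x) \<otimes>\<^bsub>G\<^esub> c"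
    using \<open>affine k g\<close> unfolding affine_def by blast
  let ?K = "(m - 1) * k"
  have "phi ((inv\<^bsub>RBij Q\<^esub> g) x) = (f ^^ ?K) (phi x) \<otimes>\<^bsub>G\<^esub> (f ^^ ?K) (inv\<^bsub>G\<^esub> c)"
    if x: "x \<in> Q" for x
  proof -
    let ?y = "(inv\<^bsub>RBij Q\<^esub> g) x"
    have y: "?y \<in> Q"
      using Bij_apply_closed[OF inv_RBij_Bij[OF g] x] .
    have "phi x = (f ^^ k) (phi ?y) \<otimes>\<^bsub>G\<^esub> c"
      using c(2)[OF y] RBij_apply_inv[OF g x] by simp
    then have fy: "(f ^^ k) (phi ?y) = phi x \<otimes>\<^bsub>G\<^esub> inv\<^bsub>G\<^esub> c"
      using G.inv_solve_right[OF funpow_f_closed[OF phi_closed[OF y]] phi_closed[OF x] c(1)] by simp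
    have "?K + k = m * k"
      using f_period(1) by (simp add: algebra_simps)
    then have "phi ?y = (f ^^ (?K + k)) (phi ?y)"
      using funpow_f_period[OF phi_closed[OF y]] by simp
    also have "\<dots> = (f ^^ ?K) (phi x) \<otimes>\<^bsub>G\<^esub> (f ^^ ?K) (inv\<^bsub>G\<^esub> c)"
      using phi_closed[OF x] c(1) by (simp add: funpow_add fy funpow_f_mult)
    finally show ?thesis .
  qed
  moreover have "(f ^^ ?K) (inv\<^bsub>G\<^esub> c) \<in> carrier G"
    using c(1) by (simp add: funpow_f_closed)
  ultimately show ?thesis
    unfolding affine_def by blast
qed

lemma affine_period: "affine (m * j) g \<Longrightarrow> affine 0 g"
  unfolding affine_def by (simp add: funpow_f_period phi_closed)

lemma Inn_affine: "g \<in> Inn Q op \<Longrightarrow> \<exists>k. affine k g"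
proof -
  have "subgroup {g \<in> Bij Q. \<exists>k. affine k g} (RBij Q)"
  proof (rule RBij.subgroupI)
    show "{g \<in> Bij Q. \<exists>k. affine k g} \<noteq> {}"
      using affine_id id_Bij by blast
    show "inv\<^bsub>RBij Q\<^esub> g \<in> {g \<in> Bij Q. \<exists>k. affine k g}" if "g \<in> {g \<in> Bij Q. \<exists>k. affine k g}" for g
      using that affine_inv inv_RBij_Bij[of g Q] by blast
    show "g \<otimes>\<^bsub>RBij Q\<^esub> h \<in> {g \<in> Bij Q. \<exists>k. affine k g}"
      if "g \<in> {g \<in> Bij Q. \<exists>k. affine k g}" "h \<in> {g \<in> Bij Q. \<exists>k. affine k g}" for g h
      using that affine_mult RBij.m_closed[of g Q h] by (simp, blast)
  qed auto
  moreover have "Rt Q op ` Q \<subseteq> {g \<in> Bij Q. \<exists>k. affine k g}"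
    using Rt_Bij affine_Rt by blast
  ultimately show "g \<in> Inn Q op \<Longrightarrow> \<exists>k. affine k g"
    unfolding Inn_def using RBij.generate_subgroup_incl by blast
qed

text \<open>The linear parts of affine maps are powers of \<open>f\<close> and commute.\<close>
lemma affine_0_commutator:
  assumes g: "g \<in> Inn Q op" and h: "h \<in> Inn Q op"
  shows "affine 0 (g \<otimes>\<^bsub>RBij Q\<^esub> h \<otimes>\<^bsub>RBij Q\<^esub> inv\<^bsub>RBij Q\<^esub> g \<otimes>\<^bsub>RBij Q\<^esub> inv\<^bsub>RBij Q\<^esub> h)"
proof -
  obtain k l where "affine k g" "affine l h"
    using Inn_affine g h by blast
  moreover have "g \<in> Bij Q" "h \<in> Bij Q"
    using g h Inn_subset_Bij by auto
  ultimately have "affine ((m - 1) * l + ((m - 1) * k + (l + k)))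
      (g \<otimes>\<^bsub>RBij Q\<^esub> h \<otimes>\<^bsub>RBij Q\<^esub> inv\<^bsub>RBij Q\<^esub> g \<otimes>\<^bsub>RBij Q\<^esub> inv\<^bsub>RBij Q\<^esub> h)"
    by (intro affine_mult affine_inv inv_RBij_Bij RBij.m_closed[simplified])
  moreover have "(m - 1) * l + ((m - 1) * k + (l + k)) = m * (k + l)"
    using f_period(1) by (cases m) (simp_all add: algebra_simps)
  ultimately show ?thesis
    using affine_period by metis
qed

lemma InnD_affine_0: "g \<in> InnD Q op \<Longrightarrow> affine 0 g"
proof -
  have "subgroup {g \<in> Bij Q. affine 0 g} (RBij Q)"
  proof (rule RBij.subgroupI)
    show "{g \<in> Bij Q. affine 0 g} \<noteq> {}"
      using affine_id id_Bij by blast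
    show "inv\<^bsub>RBij Q\<^esub> g \<in> {g \<in> Bij Q. affine 0 g}" if "g \<in> {g \<in> Bij Q. affine 0 g}" for g
      using that affine_inv[of g 0] inv_RBij_Bij[of g Q] by simp
    show "g \<otimes>\<^bsub>RBij Q\<^esub> h \<in> {g \<in> Bij Q. affine 0 g}"
      if "g \<in> {g \<in> Bij Q. affine 0 g}" "h \<in> {g \<in> Bij Q. affine 0 g}" for g h
      using that affine_mult[of g h 0 0] RBij.m_closed[of g Q h] by simp
  qed auto
  moreover have "derived_set (RBij Q) (Inn Q op) \<subseteq> {g \<in> Bij Q. affine 0 g}"
    by (auto intro: affine_0_commutator subsetD[OF InnD_subset_Bij commutator_in_InnD])
  ultimately show "g \<in> InnD Q op \<Longrightarrow> affine 0 g"
    unfolding InnD_eq_derived derived_def using RBij.generate_subgroup_incl by blast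
qed

lemma Stab_InnD_trivial:
  assumes e: "e \<in> Q"
  shows "Stab (InnD Q op) e = {\<lambda>x\<in>Q. x}"
proof (rule Stab_eq_idI[OF _ e])
  show "(\<lambda>x\<in>Q. x) \<in> InnD Q op"
    using subgroup.one_closed[OF subgroup_InnD] by (simp add: one_RBij)
  show "n = (\<lambda>x\<in>Q. x)" if n: "n \<in> InnD Q op" "n e = e" for n
  proof -
    obtain c where c: "c \<in> carrier G" "\<And>x. x \<in> Q \<Longrightarrow> phi (n x) = phi x \<otimes>\<^bsub>G\<^esub> c"
      using InnD_affine_0[OF n(1)] unfolding affine_def by auto
    have "c = \<one>\<^bsub>G\<^esub>"
      using G.l_cancel_one'[OF phi_closed[OF e] c(1)] c(2)[OF e] n(2) by simp
    then have "phi (n x) = phi x" if "x \<in> Q" for x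
      using c(2)[OF that] phi_closed[OF that] by simp
    moreover have nB: "n \<in> Bij Q"
      using n(1) InnD_subset_Bij by blast
    ultimately have "n x = x" if "x \<in> Q" for x
      using inj_onD[OF bij_betw_imp_inj_on[OF phi_bij] _ Bij_apply_closed[OF nB that] that] that
      by blast
    then show ?thesis
      by (intro Bij_eqI[OF nB id_Bij]) simp
  qed
qed

end

lemma (in quandle_on) Stab_InnD_trivial_if_iso_galex:
  fixes G :: "('b, 'c) monoid_scheme"
  assumes Q: "finite Q" and G: "group G" and f: "f \<in> auto G"
    and iso: "quandle_iso Q op (carrier G) (galex G f)" and e: "e \<in> Q"
  shows "Stab (InnD Q op) e = {\<lambda>x\<in>Q. x}"
proof -
  obtain phi where phi: "bij_betw phi Q (carrier G)"
    "\<And>x y. x \<in> Q \<Longrightarrow> y \<in> Q \<Longrightarrow> phi (op x y) = galex G f (phi x) (phi y)"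
    using iso unfolding quandle_iso_def by blast
  obtain m where "0 < m" "\<And>z. z \<in> carrier G \<Longrightarrow> (f ^^ m) z = z"
    using funpow_periodic_on_finite[of "carrier G" f] bij_betw_finite[OF phi(1)] Q f
    by (auto simp: auto_def Bij_def)
  then interpret galex_iso Q op G f phi m
    using quandle_on_axioms G f phi by (simp add: galex_iso_def galex_iso_axioms_def)
  show ?thesis
    using Stab_InnD_trivial[OF e] .
qed

theorem mainTheorem11:
  fixes Q :: "'a set" and op :: "'a \<Rightarrow> 'a \<Rightarrow> 'a"
  assumes "finite Q" and "Q \<noteq> {}" and "connected_quandle Q op"
  shows "(\<forall>(G :: ('b, 'c) monoid_scheme) f. group G \<and> f \<in> auto G \<and>
              quandle_iso Q op (carrier G) (galex G f) \<longrightarrow>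
            card Q = card (InnD Q op) \<or> (\<forall>e\<in>Q. Stab (InnD Q op) e = {\<one>\<^bsub>InnGroup Q op\<^esub>}))
       \<and> ((card Q = card (InnD Q op) \<or> (\<forall>e\<in>Q. Stab (InnD Q op) e = {\<one>\<^bsub>InnGroup Q op\<^esub>})) \<longrightarrow>
            card Q = card (InnD Q op) \<and> (\<forall>e\<in>Q. Stab (InnD Q op) e = {\<one>\<^bsub>InnGroup Q op\<^esub>}))
       \<and> ((card Q = card (InnD Q op) \<or> (\<forall>e\<in>Q. Stab (InnD Q op) e = {\<one>\<^bsub>InnGroup Q op\<^esub>})) \<longrightarrow>
            group (InnDGroup Q op) \<and>
            (\<forall>e\<in>Q. conjR Q op e \<in> auto (InnDGroup Q op) \<and>
               quandle_iso Q op (InnD Q op) (galex (InnDGroup Q op) (conjR Q op e))))"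
proof -
  interpret connected_quandle_on Q op
    using assms(3) by (simp add: connected_quandle_def connected_quandle_on_def quandle_on_def
        connected_quandle_on_axioms_def)
  have one: "\<one>\<^bsub>InnGroup Q op\<^esub> = (\<lambda>x\<in>Q. x)"
    by (simp add: InnGroup_def one_RBij)
  show ?thesis
    unfolding one card_eq_card_InnD_iff[OF assms(1,2)]
    using Stab_InnD_trivial_if_iso_galex[OF assms(1)] group_InnDGroup conjR_auto
      quandle_iso_galex_InnD by blast
qed

end
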